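(* In a graph $G$ with $\mu_\alpha(G)\leq 1$, every internal vertex is adjacent to at most two leaves.
   Context: All graphs are finite and simple. For a graph $H$, $\alpha(H)$ is the maximum size of an independent set, $i(H)$ the minimum size of an inclusion-maximal independent set, and $\mu_\alpha(H)=\alpha(H)-i(H)$. Let $U$ be the set of vertices of $G$ whose connected component is a complete graph. In $G-U$, vertices of degree $1$ are called leaves and the others are called internal vertices. *)

theory Defs
  imports Main
begin

definition simple_graph :: "'a set \<Rightarrow> ('a \<Rightarrow> 'a \<Rightarrow> bool) \<Rightarrow> bool" where
  "simple_graph V E \<longleftrightarrow> finite V \<and> (\<forall>x y. E x y \<longrightarrow> x \<in> V \<and> y \<in> V)
     \<and> (\<forall>x y. E x y \<longrightarrow> E y x) \<and> (\<forall>x. \<not> E x x)"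

definition independent_set :: "'a set \<Rightarrow> ('a \<Rightarrow> 'a \<Rightarrow> bool) \<Rightarrow> 'a set \<Rightarrow> bool" where
  "independent_set V E S \<longleftrightarrow> S \<subseteq> V \<and> (\<forall>x\<in>S. \<forall>y\<in>S. \<not> E x y)"

definition maximal_independent_set :: "'a set \<Rightarrow> ('a \<Rightarrow> 'a \<Rightarrow> bool) \<Rightarrow> 'a set \<Rightarrow> bool" where
  "maximal_independent_set V E S \<longleftrightarrow> independent_set V E S \<and>
     (\<forall>T. independent_set V E T \<longrightarrow> S \<subseteq> T \<longrightarrow> T = S)"

definition alpha :: "'a set \<Rightarrow> ('a \<Rightarrow> 'a \<Rightarrow> bool) \<Rightarrow> nat" where
  "alpha V E = Max (card ` {S. independent_set V E S})"

definition indep_dom :: "'a set \<Rightarrow> ('a \<Rightarrow> 'a \<Rightarrow> bool) \<Rightarrow> nat" where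
  "indep_dom V E = Min (card ` {S. maximal_independent_set V E S})"

definition mu_alpha :: "'a set \<Rightarrow> ('a \<Rightarrow> 'a \<Rightarrow> bool) \<Rightarrow> nat" where
  "mu_alpha V E = alpha V E - indep_dom V E"

definition component :: "'a set \<Rightarrow> ('a \<Rightarrow> 'a \<Rightarrow> bool) \<Rightarrow> 'a \<Rightarrow> 'a set" where
  "component V E v = {w \<in> V. (\<lambda>x y. x \<in> V \<and> y \<in> V \<and> E x y)\<^sup>*\<^sup>* v w}"

definition is_complete_on :: "('a \<Rightarrow> 'a \<Rightarrow> bool) \<Rightarrow> 'a set \<Rightarrow> bool" where
  "is_complete_on E C \<longleftrightarrow> (\<forall>x\<in>C. \<forall>y\<in>C. x \<noteq> y \<longrightarrow> E x y)"

definition U_set :: "'a set \<Rightarrow> ('a \<Rightarrow> 'a \<Rightarrow> bool) \<Rightarrow> 'a set" where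
  "U_set V E = {v \<in> V. is_complete_on E (component V E v)}"

definition deg_GU :: "'a set \<Rightarrow> ('a \<Rightarrow> 'a \<Rightarrow> bool) \<Rightarrow> 'a \<Rightarrow> nat" where
  "deg_GU V E v = card {w \<in> V - U_set V E. E v w}"

definition leaf :: "'a set \<Rightarrow> ('a \<Rightarrow> 'a \<Rightarrow> bool) \<Rightarrow> 'a \<Rightarrow> bool" where
  "leaf V E v \<longleftrightarrow> v \<in> V - U_set V E \<and> deg_GU V E v = 1"

definition internal :: "'a set \<Rightarrow> ('a \<Rightarrow> 'a \<Rightarrow> bool) \<Rightarrow> 'a \<Rightarrow> bool" where
  "internal V E v \<longleftrightarrow> v \<in> V - U_set V E \<and> deg_GU V E v \<noteq> 1"

end

theory Submission
  imports Defs
begin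

text \<open>Take a maximal independent set S containing v and trade v for the leaves L adjacent to v.
  Every neighbour of a vertex outside U lies outside U, so the only neighbour of a leaf in L is v;
  hence (S - {v}) \<union> L is independent. Then alpha(G) \<ge> |S| - 1 + |L| and i(G) \<le> |S|,
  so |L| \<le> mu_alpha(G) + 1.\<close>

lemma finite_independent_sets:
  assumes "finite V"
  shows "finite {S. independent_set V E S}"
  using assms unfolding independent_set_def
  by (rule finite_subset[rotated, OF finite_Collect_subsets]) auto

lemma independent_set_finite:
  assumes "finite V" and "independent_set V E S"
  shows "finite S"
  using assms unfolding independent_set_def by (auto intro: finite_subset)

lemma card_le_alpha:
  assumes "finite V" and "independent_set V E S"
  shows "card S \<le> alpha V E"
  unfolding alpha_def using finite_independent_sets[OF assms(1)] assms(2)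
  by (auto intro: Max_ge)

lemma indep_dom_le_card:
  assumes "finite V" and "maximal_independent_set V E S"
  shows "indep_dom V E \<le> card S"
proof -
  have "finite {S. maximal_independent_set V E S}"
    using finite_independent_sets[OF assms(1)]
    by (rule finite_subset[rotated]) (auto simp: maximal_independent_set_def)
  then show ?thesis unfolding indep_dom_def using assms(2) by (auto intro: Min_le)
qed

lemma independent_set_extends_to_maximal:
  assumes fin: "finite V" and S: "independent_set V E S"
  obtains T where "S \<subseteq> T" and "maximal_independent_set V E T"
proof -
  let ?P = "\<lambda>T. independent_set V E T \<and> S \<subseteq> T"
  have "\<forall>T. ?P T \<longrightarrow> card T < Suc (card V)"
    using fin by (auto simp: independent_set_def less_Suc_eq_le intro: card_mono)
  then obtain T where T: "?P T" and greatest: "\<And>T'. ?P T' \<Longrightarrow> card T' \<le> card T"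
    using ex_has_greatest_nat[of ?P S card "Suc (card V)"] S by blast
  have "maximal_independent_set V E T"
    unfolding maximal_independent_set_def
  proof (intro conjI allI impI)
    fix T' assume T': "independent_set V E T'" "T \<subseteq> T'"
    then have "card T' \<le> card T" using T by (intro greatest) auto
    then show "T' = T" using T' independent_set_finite[OF fin] by (metis card_seteq)
  qed (use T in blast)
  with T that show ?thesis by blast
qed

lemma outside_U_edge_closed:
  assumes G: "simple_graph V E" and w: "w \<in> V - U_set V E" and "E w u"
  shows "u \<in> V - U_set V E"
proof (rule ccontr)
  let ?R = "\<lambda>x y. x \<in> V \<and> y \<in> V \<and> E x y"
  have uV: "u \<in> V" and wV: "w \<in> V" and "E u w"
    using G \<open>E w u\<close> unfolding simple_graph_def by blast+
  then have "?R\<^sup>*\<^sup>* u w" by (intro r_into_rtranclp) auto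
  then have sub: "component V E w \<subseteq> component V E u"
    unfolding component_def by (auto intro: rtranclp_trans)
  assume "u \<notin> V - U_set V E"
  then have "is_complete_on E (component V E u)" using uV unfolding U_set_def by auto
  then have "is_complete_on E (component V E w)" using sub unfolding is_complete_on_def by blast
  then show False using w wV unfolding U_set_def by auto
qed

lemma leaf_unique_neighbour:
  assumes G: "simple_graph V E" and "leaf V E w" and "E w x" and "E w y"
  shows "x = y"
proof -
  have w: "w \<in> V - U_set V E" and one: "card {z \<in> V - U_set V E. E w z} = 1"
    using \<open>leaf V E w\<close> unfolding leaf_def deg_GU_def by auto
  have "x \<in> {z \<in> V - U_set V E. E w z}" and "y \<in> {z \<in> V - U_set V E. E w z}"
    using outside_U_edge_closed[OF G w] \<open>E w x\<close> \<open>E w y\<close> by auto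
  with one show ?thesis by (metis card_1_singletonE singletonD)
qed

lemma independent_set_swap_leaves:
  assumes G: "simple_graph V E" and S: "independent_set V E S" and "v \<in> S"
  shows "independent_set V E ((S - {v}) \<union> {w. leaf V E w \<and> E v w})"
    (is "independent_set V E ((S - {v}) \<union> ?L)")
proof -
  have sym: "\<And>x y. E x y \<Longrightarrow> E y x" and irr: "\<And>x. \<not> E x x"
    and inV: "\<And>x y. E x y \<Longrightarrow> x \<in> V \<and> y \<in> V"
    using G unfolding simple_graph_def by blast+
  have leaf_edge: "y = v" if "x \<in> ?L" and "E x y" for x y
    using that leaf_unique_neighbour[OF G, of x y v] sym by auto
  show ?thesis
    unfolding independent_set_def
  proof (intro conjI ballI notI)
    show "(S - {v}) \<union> ?L \<subseteq> V" using S inV unfolding independent_set_def by auto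
  next
    fix x y assume x: "x \<in> (S - {v}) \<union> ?L" and y: "y \<in> (S - {v}) \<union> ?L" and "E x y"
    have "v \<notin> ?L" using irr by auto
    show False
    proof (cases "x \<in> ?L \<or> y \<in> ?L")
      case True
      then have "y = v \<or> x = v"
        using leaf_edge[of x y] leaf_edge[of y x] \<open>E x y\<close> sym[OF \<open>E x y\<close>] by blast
      then show False using x y \<open>v \<notin> ?L\<close> by blast
    next
      case False
      with x y \<open>E x y\<close> S show False unfolding independent_set_def by blast
    qed
  qed
qed

lemma card_leaf_neighbours_le_mu_alpha:
  assumes G: "simple_graph V E" and "v \<in> V"
  shows "card {w. leaf V E w \<and> E v w} \<le> mu_alpha V E + 1"
proof -
  let ?L = "{w. leaf V E w \<and> E v w}"
  have fin: "finite V" and irr: "\<And>x. \<not> E x x" and inV: "\<And>x y. E x y \<Longrightarrow> y \<in> V"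
    using G unfolding simple_graph_def by blast+
  have finL: "finite ?L" using fin inV by (auto intro: finite_subset)
  have "independent_set V E {v}" using \<open>v \<in> V\<close> irr unfolding independent_set_def by auto
  then obtain S where "v \<in> S" and S: "maximal_independent_set V E S"
    using independent_set_extends_to_maximal[OF fin] by blast
  then have Sind: "independent_set V E S" and finS: "finite S"
    using independent_set_finite[OF fin] unfolding maximal_independent_set_def by auto
  have "?L \<inter> S = {}" using Sind \<open>v \<in> S\<close> unfolding independent_set_def by blast
  then have "card ((S - {v}) \<union> ?L) = card S - 1 + card ?L"
    using finS finL \<open>v \<in> S\<close> by (subst card_Un_disjoint) auto
  then have "card S - 1 + card ?L \<le> alpha V E"
    using card_le_alpha[OF fin independent_set_swap_leaves[OF G Sind \<open>v \<in> S\<close>]] by simp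
  moreover have "indep_dom V E \<le> card S" using indep_dom_le_card[OF fin S] .
  moreover have "card S \<ge> 1" using \<open>v \<in> S\<close> finS by (metis One_nat_def Suc_leI card_gt_0_iff empty_iff)
  ultimately show ?thesis unfolding mu_alpha_def by linarith
qed

theorem corollary6:
  fixes V :: "'a set" and E :: "'a \<Rightarrow> 'a \<Rightarrow> bool" and v :: 'a
  assumes "simple_graph V E"
    and "mu_alpha V E \<le> 1"
    and "internal V E v"
  shows "card {w. leaf V E w \<and> E v w} \<le> 2"
proof -
  have "v \<in> V" using \<open>internal V E v\<close> unfolding internal_def by auto
  then show ?thesis
    using card_leaf_neighbours_le_mu_alpha[OF \<open>simple_graph V E\<close>] \<open>mu_alpha V E \<le> 1\<close> by fastforce
qed

end
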